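(* Let $Y\in\mathbb{R}^n$ satisfy $Y=X\beta+\sigma\xi$ with a deterministic matrix $X\in\mathbb{R}^{n\times p}$ with columns $X_1,\dots,X_p$, $\sigma>0$ and $\xi\sim\mathcal{N}(0,\mathbb{I}_n)$. For any $a>0$, $q\ge1$ and $s<p$, for every $s'\in(0,s)$, $$\inf_{\hat\beta}\sup_{\beta\in\Omega^p_{s,a}}\mathbf{E}_\beta\big(\|\hat\beta-\beta\|_q^q\big)\ \ge\ a^q\frac{s'}{s}\Big(\frac{1}{2^q}\Psi(p,s,a,\sigma,X)-2s\,e^{-\frac{(s-s')^2}{2s}}\Big),$$ where the infimum is over all estimators $\hat\beta$.
   Context: $\Omega^p_{s,a}=\{\beta\in\mathbb{R}^p:\ |\beta|_0\le s\ \text{and}\ |\beta_i|\ge a\ \forall i\in S_\beta\}$, where $|\beta|_0$ is the number of nonzero entries and $S_\beta$ the set of indices of nonzero entries. $\mathbf{E}_\beta$ is expectation under the model with parameter $\beta$; $\|\cdot\|_q$ is the $\ell_q$ norm. With $\varepsilon$ a standard Gaussian random variable and $t_j(a):=\frac a2+\frac{\sigma^2\log(\frac ps-1)}{a\|X_j\|_2^2}$ for $j=1,\dots,p$, $$\Psi(p,s,a,\sigma,X):=\sum_{j=1}^p\Big(\frac sp\mathbf{P}\big(\sigma\varepsilon\ge(a-t_j(a))\|X_j\|_2\big)+\Big(1-\frac sp\Big)\mathbf{P}\big(\sigma\varepsilon\ge t_j(a)\|X_j\|_2\big)\Big).$$ *)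

theory Defs
  imports "HOL-Probability.Probability"
begin

definition std_gauss :: "real measure" where
  "std_gauss = density lborel std_normal_density"

definition gauss_vec :: "nat \<Rightarrow> (nat \<Rightarrow> real) measure" where
  "gauss_vec n = PiM {..<n} (\<lambda>_. std_gauss)"

definition obs :: "nat \<Rightarrow> nat \<Rightarrow> (nat \<Rightarrow> nat \<Rightarrow> real) \<Rightarrow> real \<Rightarrow> (nat \<Rightarrow> real)
                   \<Rightarrow> (nat \<Rightarrow> real) \<Rightarrow> (nat \<Rightarrow> real)" where
  "obs n p X \<sigma> \<beta> \<xi> = restrict (\<lambda>i. (\<Sum>j<p. X i j * \<beta> j) + \<sigma> * \<xi> i) {..<n}"

definition l0 :: "nat \<Rightarrow> (nat \<Rightarrow> real) \<Rightarrow> nat" where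
  "l0 p \<beta> = card {i. i < p \<and> \<beta> i \<noteq> 0}"

definition Omega :: "nat \<Rightarrow> nat \<Rightarrow> real \<Rightarrow> (nat \<Rightarrow> real) set" where
  "Omega p s a = {\<beta>. (\<forall>i\<ge>p. \<beta> i = 0) \<and> l0 p \<beta> \<le> s \<and>
                      (\<forall>i<p. \<beta> i \<noteq> 0 \<longrightarrow> \<bar>\<beta> i\<bar> \<ge> a)}"

definition lq_pow :: "nat \<Rightarrow> real \<Rightarrow> (nat \<Rightarrow> real) \<Rightarrow> real" where
  "lq_pow p q v = (\<Sum>i<p. \<bar>v i\<bar> powr q)"

definition colnorm2 :: "nat \<Rightarrow> (nat \<Rightarrow> nat \<Rightarrow> real) \<Rightarrow> nat \<Rightarrow> real" where
  "colnorm2 n X j = (\<Sum>i<n. (X i j)\<^sup>2)"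

definition tj :: "nat \<Rightarrow> nat \<Rightarrow> nat \<Rightarrow> real \<Rightarrow> real \<Rightarrow> (nat \<Rightarrow> nat \<Rightarrow> real) \<Rightarrow> nat \<Rightarrow> real" where
  "tj n p s a \<sigma> X j = a / 2 + \<sigma>\<^sup>2 * ln (real p / real s - 1) / (a * colnorm2 n X j)"

definition Psi :: "nat \<Rightarrow> nat \<Rightarrow> nat \<Rightarrow> real \<Rightarrow> real \<Rightarrow> (nat \<Rightarrow> nat \<Rightarrow> real) \<Rightarrow> real" where
  "Psi n p s a \<sigma> X = (\<Sum>j<p.
      (real s / real p) * measure std_gauss
          {e. \<sigma> * e \<ge> (a - tj n p s a \<sigma> X j) * sqrt (colnorm2 n X j)}
    + (1 - real s / real p) * measure std_gauss
          {e. \<sigma> * e \<ge> tj n p s a \<sigma> X j * sqrt (colnorm2 n X j)})"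

end

theory Submission
  imports Defs
begin

(* Bound the minimax risk below by a Bayes risk. Take the prior of a * 1_S, where every coordinate
   lies in S independently with probability pi = s'/p, truncated to |S| <= s; by Chernoff's bound
   the truncation loses mass at most exp (-(s - s')^2 / (2 s)). The l_q^q loss of any estimator is
   at least (a/2)^q times the number of coordinates j at which the test "estimate_j >= a/2"
   misjudges whether j is in S. For fixed j, pairing S with S + {j} turns the expected number of
   such errors into the Bayes risk of testing N(0, I) against its shift by a X_j / sigma with
   prior weight pi on the shift. That risk is at least pi p / s times the one for prior weight
   s/p, which by the Neyman-Pearson lemma is at least the risk of the likelihood ratio test:
   the j-th summand of Psi. *)

section \<open>Gaussian measures and their shifts\<close>

lemma prob_space_std_gauss: "prob_space std_gauss"
  unfolding std_gauss_def by (rule prob_space_normal_density) simp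

lemma sets_std_gauss [simp, measurable_cong]: "sets std_gauss = sets borel"
  unfolding std_gauss_def by simp

lemma space_std_gauss [simp]: "space std_gauss = UNIV"
  unfolding std_gauss_def by simp

lemma emeasure_std_gauss_singleton [simp]: "emeasure std_gauss {x} = 0"
  unfolding std_gauss_def by (simp add: emeasure_density)

lemma prob_space_gauss_vec: "prob_space (gauss_vec n)"
  unfolding gauss_vec_def by (intro prob_space_PiM prob_space_std_gauss)

lemma sets_gauss_vec [measurable_cong]:
  "sets (gauss_vec n) = sets (PiM {..<n} (\<lambda>_. borel :: real measure))"
  unfolding gauss_vec_def by (intro sets_PiM_cong) auto

lemma space_gauss_vec: "space (gauss_vec n) = PiE {..<n} (\<lambda>_. UNIV)"
  unfolding gauss_vec_def by (simp add: space_PiM)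

lemma distr_PiM_componentwise:
  assumes I: "finite I" and M: "\<And>i. prob_space (M i)"
    and f: "\<And>i. f i \<in> measurable (M i) (N i)"
  shows "distr (PiM I M) (PiM I N) (\<lambda>x. \<lambda>i\<in>I. f i (x i)) = PiM I (\<lambda>i. distr (M i) (N i) (f i))"
proof -
  interpret D: product_prob_space "\<lambda>i. distr (M i) (N i) (f i)"
    by (intro product_prob_spaceI prob_space.prob_space_distr M f)
  interpret P: product_prob_space M
    by (intro product_prob_spaceI M)
  have f_PiM: "(\<lambda>x. \<lambda>i\<in>I. f i (x i)) \<in> measurable (PiM I M) (PiM I N)"
    using f by (intro measurable_restrict measurable_compose[OF measurable_component_singleton]) auto
  show ?thesis
  proof (rule D.PiM_eqI[OF I])
    show "sets (distr (PiM I M) (PiM I N) (\<lambda>x. \<lambda>i\<in>I. f i (x i))) = sets (PiM I (\<lambda>i. distr (M i) (N i) (f i)))"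
      by (auto intro!: sets_PiM_cong)
    fix A assume A: "\<And>i. i \<in> I \<Longrightarrow> A i \<in> sets (distr (M i) (N i) (f i))"
    have "(\<lambda>x. \<lambda>i\<in>I. f i (x i)) -` PiE I A \<inter> space (PiM I M) = PiE I (\<lambda>i. f i -` A i \<inter> space (M i))"
      by (auto simp: space_PiM PiE_def Pi_def extensional_def)
    moreover have "PiE I A \<in> sets (PiM I N)"
      using A by (intro sets_PiM_I_finite I) auto
    ultimately have "emeasure (distr (PiM I M) (PiM I N) (\<lambda>x. \<lambda>i\<in>I. f i (x i))) (PiE I A)
        = emeasure (PiM I M) (PiE I (\<lambda>i. f i -` A i \<inter> space (M i)))"
      using f_PiM by (simp add: emeasure_distr)
    also have "\<dots> = (\<Prod>i\<in>I. emeasure (M i) (f i -` A i \<inter> space (M i)))"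
      using A f by (intro P.emeasure_PiM I) (auto intro: measurable_sets)
    also have "\<dots> = (\<Prod>i\<in>I. emeasure (distr (M i) (N i) (f i)) (A i))"
      using A f by (intro prod.cong refl) (simp add: emeasure_distr)
    finally show "emeasure (distr (PiM I M) (PiM I N) (\<lambda>x. \<lambda>i\<in>I. f i (x i))) (PiE I A)
        = (\<Prod>i\<in>I. emeasure (distr (M i) (N i) (f i)) (A i))" .
  qed
qed

lemma density_PiM_prod:
  assumes I: "finite I" and M: "\<And>i. prob_space (M i)"
    and dens: "\<And>i. prob_space (density (M i) (f i))"
    and f: "\<And>i. i \<in> I \<Longrightarrow> f i \<in> borel_measurable (M i)"
  shows "density (PiM I M) (\<lambda>x. \<Prod>i\<in>I. f i (x i)) = PiM I (\<lambda>i. density (M i) (f i))"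
proof -
  interpret D: product_prob_space "\<lambda>i. density (M i) (f i)"
    by (intro product_prob_spaceI dens)
  interpret P: product_prob_space M
    by (intro product_prob_spaceI M)
  show ?thesis
  proof (rule D.PiM_eqI[OF I])
    show "sets (density (PiM I M) (\<lambda>x. \<Prod>i\<in>I. f i (x i))) = sets (PiM I (\<lambda>i. density (M i) (f i)))"
      by (auto intro!: sets_PiM_cong)
    fix A assume A: "\<And>i. i \<in> I \<Longrightarrow> A i \<in> sets (density (M i) (f i))"
    have "(\<Prod>i\<in>I. f i (x i)) * indicator (PiE I A) x = (\<Prod>i\<in>I. f i (x i) * indicator (A i) (x i))"
      if "x \<in> space (PiM I M)" for x
      using that I by (auto simp: prod.distrib indicator_def space_PiM PiE_def Pi_def prod_zero_iff)
    then have "emeasure (density (PiM I M) (\<lambda>x. \<Prod>i\<in>I. f i (x i))) (PiE I A)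
        = (\<integral>\<^sup>+x. (\<Prod>i\<in>I. f i (x i) * indicator (A i) (x i)) \<partial>PiM I M)"
      using A f by (subst emeasure_density) (auto intro!: sets_PiM_I_finite I nn_integral_cong)
    also have "\<dots> = (\<Prod>i\<in>I. \<integral>\<^sup>+y. f i y * indicator (A i) y \<partial>M i)"
      using A f by (intro P.product_nn_integral_prod I) auto
    also have "\<dots> = (\<Prod>i\<in>I. emeasure (density (M i) (f i)) (A i))"
      using A f by (intro prod.cong refl) (simp add: emeasure_density)
    finally show "emeasure (density (PiM I M) (\<lambda>x. \<Prod>i\<in>I. f i (x i))) (PiE I A)
        = (\<Prod>i\<in>I. emeasure (density (M i) (f i)) (A i))" .
  qed
qed

lemma distr_std_gauss_shift:
  "distr std_gauss borel (\<lambda>x. x + h) = density std_gauss (\<lambda>x. ennreal (exp (h * x - h\<^sup>2 / 2)))"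
proof -
  interpret prob_space std_gauss by (rule prob_space_std_gauss)
  have "distributed std_gauss lborel (\<lambda>x. x) (normal_density 0 1)"
    unfolding distributed_def std_gauss_def by (auto simp: distr_id2)
  from normal_density_affine[OF this, of 1 h]
  have "distr std_gauss lborel (\<lambda>x. h + x) = density lborel (normal_density h 1)"
    by (simp add: distributed_def)
  also have "\<dots> = density std_gauss (\<lambda>x. ennreal (exp (h * x - h\<^sup>2 / 2)))"
  proof -
    have "normal_density h 1 x = normal_density 0 1 x * exp (h * x - h\<^sup>2 / 2)" for x
    proof -
      have "- ((x - h)\<^sup>2) / 2 = - (x\<^sup>2) / 2 + (h * x - h\<^sup>2 / 2)" by (simp add: power2_diff)
      then show ?thesis unfolding normal_density_def by (simp add: exp_add[symmetric])
    qed
    then show ?thesis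
      unfolding std_gauss_def
      by (subst density_density_eq) (auto simp: ennreal_mult'[symmetric] intro!: density_cong)
  qed
  finally show ?thesis
    by (metis (no_types, lifting) add.commute distr_cong sets_lborel)
qed

definition shift_vec :: "nat \<Rightarrow> (nat \<Rightarrow> real) \<Rightarrow> (nat \<Rightarrow> real) \<Rightarrow> (nat \<Rightarrow> real)" where
  "shift_vec n h \<xi> = restrict (\<lambda>i. \<xi> i + h i) {..<n}"

lemma measurable_shift_vec [measurable]: "shift_vec n h \<in> measurable (gauss_vec n) (gauss_vec n)"
  unfolding shift_vec_def by (simp add: measurable_cong_sets[OF sets_gauss_vec sets_gauss_vec])

lemma shift_vec_in_space: "shift_vec n h \<xi> \<in> space (gauss_vec n)"
  unfolding shift_vec_def space_gauss_vec by auto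

definition gauss_shift_density :: "nat \<Rightarrow> (nat \<Rightarrow> real) \<Rightarrow> (nat \<Rightarrow> real) \<Rightarrow> real" where
  "gauss_shift_density n h \<xi> = exp ((\<Sum>i<n. h i * \<xi> i) - (\<Sum>i<n. (h i)\<^sup>2) / 2)"

lemma borel_measurable_gauss_shift_density [measurable]: "gauss_shift_density n h \<in> borel_measurable (gauss_vec n)"
  unfolding gauss_shift_density_def measurable_cong_sets[OF sets_gauss_vec refl] by simp

lemma distr_gauss_vec_shift:
  "distr (gauss_vec n) (gauss_vec n) (shift_vec n h) = density (gauss_vec n) (\<lambda>\<xi>. ennreal (gauss_shift_density n h \<xi>))"
proof -
  have "distr (gauss_vec n) (gauss_vec n) (shift_vec n h)
      = distr (PiM {..<n} (\<lambda>_. std_gauss)) (PiM {..<n} (\<lambda>_. borel)) (\<lambda>\<xi>. \<lambda>i\<in>{..<n}. \<xi> i + h i)"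
    unfolding gauss_vec_def shift_vec_def by (intro distr_cong refl sets_PiM_cong) auto
  also have "\<dots> = PiM {..<n} (\<lambda>i. distr std_gauss borel (\<lambda>x. x + h i))"
    by (intro distr_PiM_componentwise prob_space_std_gauss) auto
  also have "\<dots> = PiM {..<n} (\<lambda>i. density std_gauss (\<lambda>x. ennreal (exp (h i * x - (h i)\<^sup>2 / 2))))"
    by (simp add: distr_std_gauss_shift)
  also have "\<dots> = density (gauss_vec n) (\<lambda>\<xi>. \<Prod>i<n. ennreal (exp (h i * \<xi> i - (h i)\<^sup>2 / 2)))"
    unfolding gauss_vec_def
    by (intro density_PiM_prod[symmetric] prob_space_std_gauss)
      (auto simp: distr_std_gauss_shift[symmetric]
        intro!: prob_space.prob_space_distr prob_space_std_gauss)
  also have "\<dots> = density (gauss_vec n) (\<lambda>\<xi>. ennreal (gauss_shift_density n h \<xi>))"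
    by (simp add: gauss_shift_density_def prod_ennreal exp_sum[symmetric] sum_subtractf sum_divide_distrib)
  finally show ?thesis .
qed

lemma emeasure_shift_vec_preimage:
  assumes "B \<in> sets (gauss_vec n)"
  shows "emeasure (gauss_vec n) {\<xi> \<in> space (gauss_vec n). shift_vec n h \<xi> \<in> B}
    = (\<integral>\<^sup>+\<xi>. ennreal (gauss_shift_density n h \<xi>) * indicator B \<xi> \<partial>gauss_vec n)"
proof -
  have "emeasure (gauss_vec n) {\<xi> \<in> space (gauss_vec n). shift_vec n h \<xi> \<in> B}
     = emeasure (distr (gauss_vec n) (gauss_vec n) (shift_vec n h)) B"
    using assms by (subst emeasure_distr) (auto simp: vimage_def Int_def conj_commute)
  then show ?thesis
    using assms by (simp add: distr_gauss_vec_shift emeasure_density)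
qed

lemma indep_vars_gauss_vec_components:
  assumes "n > 0"
  shows "prob_space.indep_vars (gauss_vec n) (\<lambda>_. borel) (\<lambda>i \<xi>. \<xi> i) {..<n}"
proof -
  interpret prob_space "gauss_vec n" by (rule prob_space_gauss_vec)
  have component: "distr (gauss_vec n) borel (\<lambda>\<xi>. \<xi> i) = std_gauss" if "i < n" for i
  proof -
    have "distr (gauss_vec n) borel (\<lambda>\<xi>. \<xi> i) = distr (gauss_vec n) std_gauss (\<lambda>\<xi>. \<xi> i)"
      by (intro distr_cong) auto
    also have "\<dots> = std_gauss"
      unfolding gauss_vec_def using that by (intro distr_PiM_component prob_space_std_gauss) auto
    finally show ?thesis .
  qed
  have "distr (gauss_vec n) (PiM {..<n} (\<lambda>_. borel)) (\<lambda>\<xi>. \<lambda>i\<in>{..<n}. \<xi> i)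
      = distr (gauss_vec n) (PiM {..<n} (\<lambda>_. borel)) (\<lambda>\<xi>. \<xi>)"
    by (rule distr_cong) (auto simp: space_gauss_vec)
  also have "\<dots> = gauss_vec n"
    by (rule distr_id2) (simp add: sets_gauss_vec)
  also have "\<dots> = PiM {..<n} (\<lambda>i. distr (gauss_vec n) borel (\<lambda>\<xi>. \<xi> i))"
    by (subst (1) gauss_vec_def) (rule PiM_cong; simp add: component)
  finally show ?thesis
    using assms
    by (subst indep_vars_iff_distr_eq_PiM') (auto simp: measurable_cong_sets[OF sets_gauss_vec refl])
qed

lemma distributed_gauss_vec_component:
  assumes "i < n"
  shows "distributed (gauss_vec n) lborel (\<lambda>\<xi>. \<xi> i) (normal_density 0 1)"
proof -
  have "distr (gauss_vec n) lborel (\<lambda>\<xi>. \<xi> i) = distr (gauss_vec n) std_gauss (\<lambda>\<xi>. \<xi> i)"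
    by (intro distr_cong) auto
  also have "\<dots> = std_gauss"
    unfolding gauss_vec_def using assms by (intro distr_PiM_component prob_space_std_gauss) auto
  finally show ?thesis
    using assms
    by (simp add: distributed_def std_gauss_def measurable_cong_sets[OF sets_gauss_vec sets_lborel])
qed

lemma distributed_gauss_vec_linear:
  assumes "(\<Sum>i<n. (h i)\<^sup>2) > 0"
  shows "distributed (gauss_vec n) lborel (\<lambda>\<xi>. \<Sum>i<n. h i * \<xi> i) (normal_density 0 (sqrt (\<Sum>i<n. (h i)\<^sup>2)))"
proof -
  interpret prob_space "gauss_vec n" by (rule prob_space_gauss_vec)
  define J where "J = {i. i < n \<and> h i \<noteq> 0}"
  have J: "finite J" "J \<subseteq> {..<n}" unfolding J_def by auto
  have sum_J: "(\<Sum>i\<in>J. g i) = (\<Sum>i<n. g i)" if "\<And>i. h i = 0 \<Longrightarrow> g i = 0" for g :: "nat \<Rightarrow> real"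
    using J that by (intro sum.mono_neutral_left) (auto simp: J_def)
  have "J \<noteq> {}"
    using assms sum_J[of "\<lambda>i. (h i)\<^sup>2"] by auto
  then have "n > 0" using J by auto
  have indep: "indep_vars (\<lambda>_. borel) (\<lambda>i. (\<lambda>x. h i * x) \<circ> (\<lambda>\<xi>. \<xi> i)) J"
    by (rule indep_vars_compose[OF indep_vars_subset[OF indep_vars_gauss_vec_components[OF \<open>n > 0\<close>] J(2)]])
      auto
  have normal: "distributed (gauss_vec n) lborel ((\<lambda>x. h i * x) \<circ> (\<lambda>\<xi>. \<xi> i)) (normal_density 0 \<bar>h i\<bar>)"
    if "i \<in> J" for i
  proof -
    have "i < n" "h i \<noteq> 0" using that by (auto simp: J_def)
    with normal_density_affine[OF distributed_gauss_vec_component[OF \<open>i < n\<close>], of "h i" 0]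
    show ?thesis by (simp add: o_def)
  qed
  have "distributed (gauss_vec n) lborel (\<lambda>\<xi>. \<Sum>i\<in>J. ((\<lambda>x. h i * x) \<circ> (\<lambda>\<xi>. \<xi> i)) \<xi>)
      (normal_density (\<Sum>i\<in>J. 0) (sqrt (\<Sum>i\<in>J. \<bar>h i\<bar>\<^sup>2)))"
    by (rule sum_indep_normal[OF J(1) \<open>J \<noteq> {}\<close> indep _ normal]) (simp add: J_def)
  then show ?thesis
    by (simp add: sum_J)
qed

lemma measure_gauss_vec_linear:
  assumes "(\<Sum>i<n. (h i)\<^sup>2) > 0" and B: "B \<in> sets borel"
  shows "measure (gauss_vec n) {\<xi> \<in> space (gauss_vec n). (\<Sum>i<n. h i * \<xi> i) \<in> B}
       = measure std_gauss {e. sqrt (\<Sum>i<n. (h i)\<^sup>2) * e \<in> B}"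
proof -
  let ?r = "sqrt (\<Sum>i<n. (h i)\<^sup>2)"
  interpret prob_space std_gauss by (rule prob_space_std_gauss)
  have "distributed std_gauss lborel (\<lambda>x. x) (normal_density 0 1)"
    unfolding distributed_def std_gauss_def by (auto simp: distr_id2)
  from normal_density_affine[OF this, of ?r 0]
  have "distributed std_gauss lborel (\<lambda>e. ?r * e) (normal_density 0 ?r)"
    using assms by simp
  with distributed_gauss_vec_linear[OF assms(1)]
  have "distr (gauss_vec n) lborel (\<lambda>\<xi>. \<Sum>i<n. h i * \<xi> i) = distr std_gauss lborel (\<lambda>e. ?r * e)"
    by (simp add: distributed_def)
  then have "measure (distr (gauss_vec n) lborel (\<lambda>\<xi>. \<Sum>i<n. h i * \<xi> i)) B
      = measure (distr std_gauss lborel (\<lambda>e. ?r * e)) B"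
    by simp
  then show ?thesis
    using B
    by (simp add: measure_distr measurable_cong_sets[OF sets_gauss_vec sets_lborel] vimage_def
        Int_def conj_commute)
qed

lemma measure_std_gauss_ge_le_gt:
  assumes "r > 0"
  shows "measure std_gauss {e. r * e \<ge> k} \<le> measure std_gauss {e. r * e > k}"
proof -
  interpret prob_space std_gauss by (rule prob_space_std_gauss)
  have "{e. r * e \<ge> k} \<subseteq> {e. r * e > k} \<union> {k / r}"
    using assms by (auto simp: field_simps)
  then have "measure std_gauss {e. r * e \<ge> k} \<le> measure std_gauss ({e. r * e > k} \<union> {k / r})"
    by (intro finite_measure_mono) auto
  also have "\<dots> \<le> measure std_gauss {e. r * e > k} + measure std_gauss {k / r}"
    by (intro measure_subadditive) auto
  finally show ?thesis
    by (simp add: measure_def)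
qed

section \<open>Testing a Gaussian shift\<close>

text \<open>Bayes risk of the test that decides for \<open>N(h, I)\<close> against \<open>N(0, I)\<close> on \<open>A\<close>, with prior
  weight \<open>\<pi>\<close> on the alternative.\<close>
definition test_risk :: "nat \<Rightarrow> (nat \<Rightarrow> real) \<Rightarrow> real \<Rightarrow> (nat \<Rightarrow> real) set \<Rightarrow> real" where
  "test_risk n h \<pi> A = (1 - \<pi>) * measure (gauss_vec n) A
     + \<pi> * measure (gauss_vec n) {\<xi> \<in> space (gauss_vec n). shift_vec n h \<xi> \<notin> A}"

lemma test_risk_nonneg: "0 \<le> \<pi> \<Longrightarrow> \<pi> \<le> 1 \<Longrightarrow> 0 \<le> test_risk n h \<pi> A"
  unfolding test_risk_def by simp

lemma test_risk_eq_nn_integral: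
  assumes A: "A \<in> sets (gauss_vec n)" and \<pi>: "0 \<le> \<pi>" "\<pi> \<le> 1"
  shows "ennreal (test_risk n h \<pi> A) = (\<integral>\<^sup>+\<xi>. ennreal (1 - \<pi>) * indicator A \<xi>
      + ennreal (\<pi> * gauss_shift_density n h \<xi>) * indicator (space (gauss_vec n) - A) \<xi> \<partial>gauss_vec n)"
proof -
  interpret prob_space "gauss_vec n" by (rule prob_space_gauss_vec)
  have compl: "space (gauss_vec n) - A \<in> sets (gauss_vec n)" using A by auto
  have "{\<xi> \<in> space (gauss_vec n). shift_vec n h \<xi> \<notin> A}
      = {\<xi> \<in> space (gauss_vec n). shift_vec n h \<xi> \<in> space (gauss_vec n) - A}"
    using shift_vec_in_space by auto
  then have "ennreal (measure (gauss_vec n) {\<xi> \<in> space (gauss_vec n). shift_vec n h \<xi> \<notin> A})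
      = (\<integral>\<^sup>+\<xi>. ennreal (gauss_shift_density n h \<xi>) * indicator (space (gauss_vec n) - A) \<xi> \<partial>gauss_vec n)"
    using emeasure_shift_vec_preimage[OF compl] by (simp add: emeasure_eq_measure)
  then have "ennreal (test_risk n h \<pi> A) = ennreal (1 - \<pi>) * emeasure (gauss_vec n) A
      + ennreal \<pi> * (\<integral>\<^sup>+\<xi>. ennreal (gauss_shift_density n h \<xi>) * indicator (space (gauss_vec n) - A) \<xi> \<partial>gauss_vec n)"
    using \<pi> by (simp add: test_risk_def ennreal_plus ennreal_mult emeasure_eq_measure)
  also have "\<dots> = (\<integral>\<^sup>+\<xi>. ennreal (1 - \<pi>) * indicator A \<xi> \<partial>gauss_vec n)
      + (\<integral>\<^sup>+\<xi>. ennreal \<pi> * (ennreal (gauss_shift_density n h \<xi>) * indicator (space (gauss_vec n) - A) \<xi>) \<partial>gauss_vec n)"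
    using A compl by (simp add: nn_integral_cmult)
  also have "\<dots> = (\<integral>\<^sup>+\<xi>. ennreal (1 - \<pi>) * indicator A \<xi>
      + ennreal (\<pi> * gauss_shift_density n h \<xi>) * indicator (space (gauss_vec n) - A) \<xi> \<partial>gauss_vec n)"
    using A compl \<pi>
    by (subst nn_integral_add) (auto simp: ennreal_mult gauss_shift_density_def mult.assoc)
  finally show ?thesis .
qed

lemma nn_integral_indicator_split_min:
  fixes f g :: "'a \<Rightarrow> ennreal"
  shows "(\<integral>\<^sup>+x. f x * indicator {x \<in> space M. f x \<le> g x} x
      + g x * indicator (space M - {x \<in> space M. f x \<le> g x}) x \<partial>M)
    \<le> (\<integral>\<^sup>+x. f x * indicator A x + g x * indicator (space M - A) x \<partial>M)"
  by (intro nn_integral_mono) (auto simp: indicator_def)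

lemma test_risk_likelihood_ratio_le:
  assumes A: "A \<in> sets (gauss_vec n)" and \<pi>: "0 \<le> \<pi>" "\<pi> \<le> 1"
  shows "test_risk n h \<pi> {\<xi> \<in> space (gauss_vec n). 1 - \<pi> \<le> \<pi> * gauss_shift_density n h \<xi>}
    \<le> test_risk n h \<pi> A"
proof -
  let ?A\<^sub>0 = "{\<xi> \<in> space (gauss_vec n). 1 - \<pi> \<le> \<pi> * gauss_shift_density n h \<xi>}"
  have "?A\<^sub>0 = {\<xi> \<in> space (gauss_vec n). ennreal (1 - \<pi>) \<le> ennreal (\<pi> * gauss_shift_density n h \<xi>)}"
    using \<pi> by (auto simp: gauss_shift_density_def)
  moreover have "?A\<^sub>0 \<in> sets (gauss_vec n)"
    by measurable
  ultimately have "ennreal (test_risk n h \<pi> ?A\<^sub>0) \<le> ennreal (test_risk n h \<pi> A)"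
    using A \<pi> by (simp add: test_risk_eq_nn_integral nn_integral_indicator_split_min)
  then show ?thesis
    using \<pi> by (simp add: ennreal_le_iff test_risk_nonneg)
qed

lemma gauss_shift_density_ge_iff:
  assumes "0 < \<pi>" "\<pi> < 1"
  shows "1 - \<pi> \<le> \<pi> * gauss_shift_density n h \<xi>
    \<longleftrightarrow> (\<Sum>i<n. (h i)\<^sup>2) / 2 + ln ((1 - \<pi>) / \<pi>) \<le> (\<Sum>i<n. h i * \<xi> i)"
proof -
  have "1 - \<pi> \<le> \<pi> * gauss_shift_density n h \<xi> \<longleftrightarrow> (1 - \<pi>) / \<pi> \<le> gauss_shift_density n h \<xi>"
    using assms by (simp add: divide_le_eq mult.commute)
  also have "\<dots> \<longleftrightarrow> ln ((1 - \<pi>) / \<pi>) \<le> (\<Sum>i<n. h i * \<xi> i) - (\<Sum>i<n. (h i)\<^sup>2) / 2"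
    unfolding gauss_shift_density_def using assms by (subst ln_le_cancel_iff[symmetric]) auto
  finally show ?thesis
    by linarith
qed

lemma test_risk_ge_gauss_tails:
  assumes pos: "(\<Sum>i<n. (h i)\<^sup>2) > 0" and \<pi>: "0 < \<pi>" "\<pi> < 1" and A: "A \<in> sets (gauss_vec n)"
  defines "r \<equiv> sqrt (\<Sum>i<n. (h i)\<^sup>2)"
  defines "c \<equiv> r\<^sup>2 / 2 + ln ((1 - \<pi>) / \<pi>)"
  shows "(1 - \<pi>) * measure std_gauss {e. r * e \<ge> c} + \<pi> * measure std_gauss {e. r * e \<ge> r\<^sup>2 - c}
    \<le> test_risk n h \<pi> A"
proof -
  let ?Z = "\<lambda>\<xi>. \<Sum>i<n. h i * \<xi> i"
  define A\<^sub>0 where "A\<^sub>0 = {\<xi> \<in> space (gauss_vec n). c \<le> ?Z \<xi>}"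
  have r2: "r\<^sup>2 = (\<Sum>i<n. (h i)\<^sup>2)"
    unfolding r_def using pos by simp
  have "c \<le> ?Z \<xi> \<longleftrightarrow> 1 - \<pi> \<le> \<pi> * gauss_shift_density n h \<xi>" for \<xi>
    unfolding c_def r2 using \<pi> by (rule gauss_shift_density_ge_iff[symmetric])
  then have "test_risk n h \<pi> A\<^sub>0 \<le> test_risk n h \<pi> A"
    unfolding A\<^sub>0_def using test_risk_likelihood_ratio_le[OF A] \<pi> by simp
  moreover have "measure (gauss_vec n) A\<^sub>0 = measure std_gauss {e. r * e \<ge> c}"
    using measure_gauss_vec_linear[OF pos, of "{c..}"] unfolding A\<^sub>0_def r_def by simp
  moreover have "measure std_gauss {e. r * e \<ge> r\<^sup>2 - c}
      \<le> measure (gauss_vec n) {\<xi> \<in> space (gauss_vec n). shift_vec n h \<xi> \<notin> A\<^sub>0}"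
  proof -
    have "?Z (shift_vec n h \<xi>) = ?Z \<xi> + r\<^sup>2" for \<xi>
      unfolding shift_vec_def r2 by (simp add: sum.distrib distrib_left power2_eq_square)
    then have "{\<xi> \<in> space (gauss_vec n). shift_vec n h \<xi> \<notin> A\<^sub>0}
        = {\<xi> \<in> space (gauss_vec n). (\<Sum>i<n. - h i * \<xi> i) \<in> {r\<^sup>2 - c<..}}"
      unfolding A\<^sub>0_def using shift_vec_in_space[of n h] by (auto simp: sum_negf)
    then have "measure (gauss_vec n) {\<xi> \<in> space (gauss_vec n). shift_vec n h \<xi> \<notin> A\<^sub>0}
        = measure std_gauss {e. r * e > r\<^sup>2 - c}"
      using measure_gauss_vec_linear[where h="\<lambda>i. - h i" and B="{r\<^sup>2 - c<..}"] pos by (simp add: r_def)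
    moreover have "r > 0"
      unfolding r_def using pos by simp
    ultimately show ?thesis
      using measure_std_gauss_ge_le_gt by simp
  qed
  ultimately show ?thesis
    unfolding test_risk_def using \<pi> by (smt (verit) mult_left_mono)
qed

lemma test_risk_prior_scale:
  assumes "0 \<le> \<pi>" "\<pi> \<le> \<pi>\<^sub>0" "\<pi>\<^sub>0 \<le> 1"
  shows "(\<pi> / \<pi>\<^sub>0) * test_risk n h \<pi>\<^sub>0 A \<le> test_risk n h \<pi> A"
proof (cases "\<pi>\<^sub>0 = 0")
  case False
  then have "(\<pi> / \<pi>\<^sub>0) * (1 - \<pi>\<^sub>0) \<le> 1 - \<pi>" "(\<pi> / \<pi>\<^sub>0) * \<pi>\<^sub>0 = \<pi>"
    using assms by (auto simp: field_simps)
  then show ?thesis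
    unfolding test_risk_def distrib_left mult.assoc[symmetric]
    by (intro add_mono mult_right_mono) auto
qed (use assms in \<open>simp add: test_risk_def\<close>)

definition psi_coord :: "nat \<Rightarrow> nat \<Rightarrow> nat \<Rightarrow> real \<Rightarrow> real \<Rightarrow> (nat \<Rightarrow> nat \<Rightarrow> real) \<Rightarrow> nat \<Rightarrow> real" where
  "psi_coord n p s a \<sigma> X j =
      (real s / real p) * measure std_gauss
          {e. \<sigma> * e \<ge> (a - tj n p s a \<sigma> X j) * sqrt (colnorm2 n X j)}
    + (1 - real s / real p) * measure std_gauss
          {e. \<sigma> * e \<ge> tj n p s a \<sigma> X j * sqrt (colnorm2 n X j)}"

lemma Psi_eq_sum_psi_coord: "Psi n p s a \<sigma> X = (\<Sum>j<p. psi_coord n p s a \<sigma> X j)"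
  unfolding Psi_def psi_coord_def ..

text \<open>\<open>tj\<close> is the Neyman--Pearson threshold for the prior weight \<open>s / p\<close> on the shift
  \<open>a X\<^sub>j / \<sigma>\<close>, so \<open>psi_coord\<close> is the Bayes risk of the likelihood ratio test.\<close>
lemma psi_coord_eq_gauss_tails:
  assumes \<sigma>: "\<sigma> > 0" and a: "a > 0" and s: "0 < s" "s < p" and "colnorm2 n X j > 0"
  defines "\<pi> \<equiv> real s / real p"
  defines "r \<equiv> sqrt (\<Sum>i<n. (a * X i j / \<sigma>)\<^sup>2)"
  defines "c \<equiv> r\<^sup>2 / 2 + ln ((1 - \<pi>) / \<pi>)"
  shows "psi_coord n p s a \<sigma> X j
    = (1 - \<pi>) * measure std_gauss {e. r * e \<ge> c} + \<pi> * measure std_gauss {e. r * e \<ge> r\<^sup>2 - c}"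
proof -
  define k where "k = sqrt (colnorm2 n X j)"
  define t where "t = tj n p s a \<sigma> X j"
  have k: "k > 0" "k\<^sup>2 = colnorm2 n X j"
    unfolding k_def using assms by auto
  have "(\<Sum>i<n. (a * X i j / \<sigma>)\<^sup>2) = (a / \<sigma>)\<^sup>2 * k\<^sup>2"
    unfolding k(2) colnorm2_def
    by (simp add: sum_distrib_left power_mult_distrib power_divide sum_divide_distrib)
  then have r: "r = a * k / \<sigma>"
    unfolding r_def using a \<sigma> k by (simp add: real_sqrt_mult k_def)
  have "(1 - \<pi>) / \<pi> = real p / real s - 1"
    unfolding \<pi>_def using s by (simp add: field_simps)
  then have t: "t = a / 2 + \<sigma>\<^sup>2 * ln ((1 - \<pi>) / \<pi>) / (a * k\<^sup>2)"
    unfolding t_def tj_def k(2) by simp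
  have scale: "u \<le> r * e \<longleftrightarrow> u * (\<sigma>\<^sup>2 / (a * k)) \<le> \<sigma> * e" for u e
  proof -
    have "r * e * (\<sigma>\<^sup>2 / (a * k)) = \<sigma> * e"
      unfolding r using \<sigma> a k(1) by (simp add: field_simps power2_eq_square)
    moreover have "\<sigma>\<^sup>2 / (a * k) > 0"
      using \<sigma> a k by simp
    ultimately show ?thesis
      by (metis mult_le_cancel_right_pos)
  qed
  have "c * (\<sigma>\<^sup>2 / (a * k)) = t * k" "(r\<^sup>2 - c) * (\<sigma>\<^sup>2 / (a * k)) = (a - t) * k"
    unfolding c_def t r using \<sigma> a k(1) by (simp_all add: field_simps power2_eq_square)
  then show ?thesis
    unfolding psi_coord_def scale \<pi>_def t_def k_def by (simp add: add.commute)
qed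

lemma psi_coord_le_test_risk:
  assumes "\<sigma> > 0" "a > 0" "0 < s" "s < p" and "colnorm2 n X j \<noteq> 0" and "A \<in> sets (gauss_vec n)"
  shows "psi_coord n p s a \<sigma> X j \<le> test_risk n (\<lambda>i. a * X i j / \<sigma>) (real s / real p) A"
proof -
  have pos: "colnorm2 n X j > 0"
    using assms(5) unfolding colnorm2_def by (metis sum_nonneg zero_le_power2 order_le_less)
  moreover have "(\<Sum>i<n. (a * X i j / \<sigma>)\<^sup>2) = (a / \<sigma>)\<^sup>2 * colnorm2 n X j"
    unfolding colnorm2_def
    by (simp add: sum_distrib_left power_mult_distrib power_divide sum_divide_distrib)
  ultimately have "(\<Sum>i<n. (a * X i j / \<sigma>)\<^sup>2) > 0"
    using assms by simp
  then show ?thesis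
    unfolding psi_coord_eq_gauss_tails[OF assms(1-4) pos]
    using assms(3,4,6) by (intro test_risk_ge_gauss_tails) auto
qed

lemma psi_coord_nonneg: "s \<le> p \<Longrightarrow> 0 \<le> psi_coord n p s a \<sigma> X j"
  unfolding psi_coord_def by (cases "p = 0") (auto intro!: add_nonneg_nonneg)

lemma psi_coord_le:
  assumes "\<sigma> > 0" "a > 0" "0 < s" "s < p" "colnorm2 n X j \<noteq> 0"
  shows "psi_coord n p s a \<sigma> X j \<le> real s / real p"
proof -
  interpret prob_space "gauss_vec n" by (rule prob_space_gauss_vec)
  have "test_risk n h \<pi> {} = \<pi>" for h \<pi>
    by (simp add: test_risk_def prob_space)
  then show ?thesis
    using psi_coord_le_test_risk[OF assms, of "{}"] by simp
qed

lemma Psi_nonneg: "s \<le> p \<Longrightarrow> 0 \<le> Psi n p s a \<sigma> X"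
  unfolding Psi_eq_sum_psi_coord by (intro sum_nonneg psi_coord_nonneg)

lemma Psi_le:
  assumes "\<sigma> > 0" "a > 0" "0 < s" "s < p" "\<And>j. j < p \<Longrightarrow> colnorm2 n X j \<noteq> 0"
  shows "Psi n p s a \<sigma> X \<le> real s"
proof -
  have "Psi n p s a \<sigma> X \<le> (\<Sum>j<p. real s / real p)"
    unfolding Psi_eq_sum_psi_coord using assms by (intro sum_mono psi_coord_le) auto
  then show ?thesis
    using assms by simp
qed

section \<open>Binomial weights\<close>

lemma sum_Pow_power_card:
  fixes x y :: "'b :: comm_semiring_1"
  assumes "finite Q"
  shows "(\<Sum>T\<in>Pow Q. x ^ card T * y ^ (card Q - card T)) = (x + y) ^ card Q"
proof -
  have "(\<Prod>_\<in>Q. x + y) = (\<Sum>T\<in>Pow Q. (\<Prod>_\<in>T. x) * (\<Prod>_\<in>Q - T. y))"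
    by (rule prod_add[OF assms])
  also have "\<dots> = (\<Sum>T\<in>Pow Q. x ^ card T * y ^ (card Q - card T))"
    using assms by (intro sum.cong refl) (auto simp: card_Diff_subset finite_subset)
  finally show ?thesis by simp
qed

definition binom_weight :: "real \<Rightarrow> nat \<Rightarrow> 'a set \<Rightarrow> real" where
  "binom_weight \<pi> N T = \<pi> ^ card T * (1 - \<pi>) ^ (N - card T)"

lemma binom_weight_nonneg: "0 \<le> \<pi> \<Longrightarrow> \<pi> \<le> 1 \<Longrightarrow> 0 \<le> binom_weight \<pi> N T"
  unfolding binom_weight_def by simp

lemma sum_binom_weight_Pow: "finite Q \<Longrightarrow> (\<Sum>T\<in>Pow Q. binom_weight \<pi> (card Q) T) = 1"
  unfolding binom_weight_def by (simp add: sum_Pow_power_card)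

lemma binom_weight_insert:
  assumes "finite T" "j \<notin> T" "card T < N"
  shows "binom_weight \<pi> N T = (1 - \<pi>) * binom_weight \<pi> (N - 1) T"
    and "binom_weight \<pi> N (insert j T) = \<pi> * binom_weight \<pi> (N - 1) T"
proof -
  have "card (insert j T) = Suc (card T)"
    using assms(1,2) by (rule card_insert_disjoint)
  moreover have "N - card T = Suc (N - 1 - card T)" "N - Suc (card T) = N - 1 - card T"
    using assms(3) by arith+
  ultimately show "binom_weight \<pi> N T = (1 - \<pi>) * binom_weight \<pi> (N - 1) T"
    "binom_weight \<pi> N (insert j T) = \<pi> * binom_weight \<pi> (N - 1) T"
    unfolding binom_weight_def by (simp_all only: power_Suc mult_ac)
qed

lemma ln_add_quadratic_le:
  fixes x :: real
  assumes "0 < x" "x \<le> 1"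
  shows "ln x + (1 - x) + (1 - x)\<^sup>2 / 2 \<le> 0"
proof -
  let ?f = "\<lambda>x::real. ln x + (1 - x) + (1 - x)\<^sup>2 / 2"
  have "?f x \<le> ?f 1"
  proof (rule DERIV_nonneg_imp_nondecreasing[OF assms(2)])
    fix y :: real
    assume "x \<le> y" "y \<le> 1"
    then have "y > 0" using assms by simp
    then have "(?f has_real_derivative (1 - y)\<^sup>2 / y) (at y)"
      by (auto intro!: derivative_eq_intros simp: field_simps power2_eq_square)
    with \<open>y > 0\<close> show "\<exists>d. (?f has_real_derivative d) (at y) \<and> 0 \<le> d"
      by auto
  qed
  then show ?thesis by simp
qed

lemma chernoff_exponent_le:
  fixes s s' :: real
  assumes "0 < s'" "s' \<le> s"
  shows "s - s' - s * ln (s / s') \<le> - (s - s')\<^sup>2 / (2 * s)"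
proof -
  have "s * (ln (s' / s) + (1 - s' / s) + (1 - s' / s)\<^sup>2 / 2) \<le> 0"
    using assms ln_add_quadratic_le[of "s' / s"] by (intro mult_nonneg_nonpos) auto
  then have "s * ln (s' / s) + s * (1 - s' / s) + s * ((1 - s' / s)\<^sup>2 / 2) \<le> 0"
    by (simp only: distrib_left)
  moreover have "s * (1 - s' / s) = s - s'" "s * ((1 - s' / s)\<^sup>2 / 2) = (s - s')\<^sup>2 / (2 * s)"
    using assms by (simp_all add: field_simps power2_eq_square)
  moreover have "ln (s / s') = - ln (s' / s)"
    using assms by (simp add: ln_div)
  ultimately show ?thesis
    by simp
qed

text \<open>Chernoff's bound, with the exponential moment taken at \<open>u = s / s'\<close>.\<close>
lemma binom_weight_upper_tail_le:
  fixes s :: nat and s' \<pi> :: real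
  assumes Q: "finite Q" and s': "0 < s'" "s' < real s" and \<pi>: "0 < \<pi>" "\<pi> < 1"
    and mean: "real (card Q) * \<pi> \<le> s'"
  shows "(\<Sum>T\<in>{T \<in> Pow Q. s \<le> card T}. binom_weight \<pi> (card Q) T) \<le> exp (- (real s - s')\<^sup>2 / (2 * real s))"
proof -
  define u where "u = real s / s'"
  have u: "u > 1" unfolding u_def using s' by simp
  then have "0 < \<pi> * u" using \<pi> by simp
  have "(\<Sum>T\<in>{T \<in> Pow Q. s \<le> card T}. binom_weight \<pi> (card Q) T)
      \<le> (\<Sum>T\<in>{T \<in> Pow Q. s \<le> card T}. binom_weight \<pi> (card Q) T * u ^ card T / u ^ s)"
    using u \<pi> binom_weight_nonneg[of \<pi>]
    by (intro sum_mono) (auto simp: le_divide_eq intro!: mult_left_mono power_increasing)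
  also have "\<dots> \<le> (\<Sum>T\<in>Pow Q. binom_weight \<pi> (card Q) T * u ^ card T / u ^ s)"
    using Q u \<pi> binom_weight_nonneg[of \<pi>] by (intro sum_mono2) (auto intro!: divide_nonneg_nonneg mult_nonneg_nonneg)
  also have "\<dots> = (\<pi> * u + (1 - \<pi>)) ^ card Q / u ^ s"
    using Q
    by (simp add: binom_weight_def sum_divide_distrib[symmetric] power_mult_distrib mult_ac
        flip: sum_Pow_power_card)
  also have "\<dots> \<le> exp (\<pi> * (u - 1)) ^ card Q / u ^ s"
  proof (intro divide_right_mono power_mono)
    show "\<pi> * u + (1 - \<pi>) \<le> exp (\<pi> * (u - 1))"
      using exp_ge_add_one_self[of "\<pi> * (u - 1)"] by (simp add: algebra_simps)
    show "0 \<le> \<pi> * u + (1 - \<pi>)"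
      using \<open>0 < \<pi> * u\<close> \<pi> by linarith
  qed (use u in simp)
  also have "\<dots> \<le> exp (s' * (u - 1)) / u ^ s"
    using u mean
    by (auto simp: exp_of_nat_mult[symmetric] mult.assoc intro!: divide_right_mono mult_right_mono)
  also have "\<dots> = exp (real s - s' - real s * ln u)"
  proof -
    have "s' * (u - 1) = real s - s'"
      using s' by (simp add: u_def field_simps)
    moreover have "u ^ s = exp (real s * ln u)"
      using u by (simp add: exp_of_nat_mult)
    ultimately show ?thesis
      by (simp add: exp_diff)
  qed
  also have "\<dots> \<le> exp (- (real s - s')\<^sup>2 / (2 * real s))"
    unfolding u_def using s' chernoff_exponent_le[of s' "real s"] by simp
  finally show ?thesis .
qed

lemma binom_weight_lower_tail_ge:
  fixes s :: nat and s' \<pi> :: real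
  assumes Q: "finite Q" and s': "0 < s'" "s' < real s" and \<pi>: "0 < \<pi>" "\<pi> < 1"
    and mean: "real (card Q) * \<pi> \<le> s'"
  shows "1 - exp (- (real s - s')\<^sup>2 / (2 * real s))
    \<le> (\<Sum>T\<in>{T \<in> Pow Q. card T < s}. binom_weight \<pi> (card Q) T)"
proof -
  define Lo where "Lo = {T \<in> Pow Q. card T < s}"
  define Hi where "Hi = {T \<in> Pow Q. s \<le> card T}"
  have "Pow Q = Lo \<union> Hi"
    unfolding Lo_def Hi_def by auto
  then have "(\<Sum>T\<in>Pow Q. binom_weight \<pi> (card Q) T)
      = (\<Sum>T\<in>Lo. binom_weight \<pi> (card Q) T) + (\<Sum>T\<in>Hi. binom_weight \<pi> (card Q) T)"
    using Q by (simp only:) (rule sum.union_disjoint; auto simp: Lo_def Hi_def)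
  then show ?thesis
    using binom_weight_upper_tail_le[OF assms] sum_binom_weight_Pow[OF Q, of \<pi>]
    unfolding Lo_def Hi_def by linarith
qed

section \<open>Reduction to coordinatewise tests\<close>

lemma sum_insert_pairs_le:
  fixes f :: "'a set \<Rightarrow> real"
  assumes "finite \<S>" "\<G> \<union> insert j ` \<G> \<subseteq> \<S>" "\<And>T. T \<in> \<G> \<Longrightarrow> j \<notin> T" "\<And>S. S \<in> \<S> \<Longrightarrow> 0 \<le> f S"
  shows "(\<Sum>T\<in>\<G>. f T + f (insert j T)) \<le> (\<Sum>S\<in>\<S>. f S)"
proof -
  have fin: "finite \<G>" "finite (insert j ` \<G>)"
    using assms(1,2) finite_subset by auto
  have "inj_on (insert j) \<G>"
    using assms(3) by (intro inj_onI) (metis insert_ident)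
  moreover have "\<G> \<inter> insert j ` \<G> = {}"
    using assms(3) by auto
  ultimately have "(\<Sum>T\<in>\<G>. f T + f (insert j T)) = (\<Sum>S\<in>\<G> \<union> insert j ` \<G>. f S)"
    using fin by (simp add: sum.union_disjoint sum.reindex sum.distrib)
  also have "\<dots> \<le> (\<Sum>S\<in>\<S>. f S)"
    using assms by (intro sum_mono2) auto
  finally show ?thesis .
qed

lemma weighted_sum_le_SUP:
  fixes w c :: "'a \<Rightarrow> real" and F :: "'b \<Rightarrow> ennreal"
  assumes "finite G" "\<And>S. S \<in> G \<Longrightarrow> g S \<in> B" "\<And>S. S \<in> G \<Longrightarrow> 0 \<le> w S" "sum w G \<le> 1"
    and "\<And>S. S \<in> G \<Longrightarrow> 0 \<le> c S" "\<And>S. S \<in> G \<Longrightarrow> ennreal (c S) \<le> F (g S)"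
  shows "ennreal (\<Sum>S\<in>G. w S * c S) \<le> (SUP x\<in>B. F x)"
proof -
  have "ennreal (\<Sum>S\<in>G. w S * c S) = (\<Sum>S\<in>G. ennreal (w S) * ennreal (c S))"
    using assms(3,5) by (simp add: sum_ennreal[symmetric] mult_nonneg_nonneg ennreal_mult)
  also have "\<dots> \<le> (\<Sum>S\<in>G. ennreal (w S) * (SUP x\<in>B. F x))"
    using assms(2,6) by (intro sum_mono mult_left_mono SUP_upper2) auto
  also have "\<dots> = ennreal (sum w G) * (SUP x\<in>B. F x)"
    using assms(3) by (simp add: sum_ennreal sum_distrib_right[symmetric])
  also have "\<dots> \<le> (SUP x\<in>B. F x)"
    using assms(4) mult_right_mono[of "ennreal (sum w G)" 1] by simp
  finally show ?thesis .
qed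

definition ind_vec :: "real \<Rightarrow> nat set \<Rightarrow> nat \<Rightarrow> real" where
  "ind_vec a S i = (if i \<in> S then a else 0)"

definition sparse_supports :: "nat \<Rightarrow> nat \<Rightarrow> nat set set" where
  "sparse_supports p s = {S \<in> Pow {..<p}. card S \<le> s}"

lemma finite_sparse_supports [simp]: "finite (sparse_supports p s)"
  unfolding sparse_supports_def by simp

lemma ind_vec_in_Omega:
  assumes "S \<in> sparse_supports p s" "a > 0"
  shows "ind_vec a S \<in> Omega p s a"
proof -
  have "{i. i < p \<and> ind_vec a S i \<noteq> 0} = S"
    using assms by (auto simp: ind_vec_def sparse_supports_def)
  then show ?thesis
    using assms unfolding Omega_def l0_def ind_vec_def sparse_supports_def by auto
qed

lemma lq_pow_ind_vec_ge:
  assumes "a > 0" "q \<ge> 0"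
  shows "(a / 2) powr q * (\<Sum>j<p. of_bool ((a / 2 \<le> v j) \<noteq> (j \<in> S))) \<le> lq_pow p q (\<lambda>i. v i - ind_vec a S i)"
  unfolding lq_pow_def sum_distrib_left
proof (intro sum_mono)
  fix j
  show "(a / 2) powr q * of_bool ((a / 2 \<le> v j) \<noteq> (j \<in> S)) \<le> \<bar>v j - ind_vec a S j\<bar> powr q"
  proof (cases "(a / 2 \<le> v j) \<noteq> (j \<in> S)")
    case True
    then have "a / 2 \<le> \<bar>v j - ind_vec a S j\<bar>"
      using assms by (cases "j \<in> S") (auto simp: ind_vec_def)
    with True assms show ?thesis
      by (simp add: powr_mono2)
  qed simp
qed

lemma measurable_obs [measurable]: "obs n p X \<sigma> \<beta> \<in> measurable (gauss_vec n) (PiM {..<n} (\<lambda>_. borel))"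
  unfolding obs_def measurable_cong_sets[OF sets_gauss_vec refl] by (intro measurable_restrict) simp

lemma obs_ind_vec_insert:
  assumes "j < p" "j \<notin> T" "\<sigma> \<noteq> 0"
  shows "obs n p X \<sigma> (ind_vec a (insert j T)) \<xi> = obs n p X \<sigma> (ind_vec a T) (shift_vec n (\<lambda>i. a * X i j / \<sigma>) \<xi>)"
proof -
  have "(\<Sum>k<p. X i k * ind_vec a (insert j T) k) = (\<Sum>k<p. X i k * ind_vec a T k) + a * X i j" for i
  proof -
    have "(\<Sum>k<p. X i k * ind_vec a (insert j T) k)
        = (\<Sum>k<p. X i k * ind_vec a T k + (if k = j then a * X i j else 0))"
      using assms by (intro sum.cong refl) (auto simp: ind_vec_def)
    then show ?thesis
      using assms by (simp add: sum.distrib)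
  qed
  then show ?thesis
    using assms by (simp add: obs_def shift_vec_def distrib_left restrict_def fun_eq_iff)
qed

locale sparse_regression =
  fixes n p :: nat and X :: "nat \<Rightarrow> nat \<Rightarrow> real" and \<sigma> a :: real
    and est :: "(nat \<Rightarrow> real) \<Rightarrow> (nat \<Rightarrow> real)"
  assumes sigma_pos: "\<sigma> > 0" and a_pos: "a > 0"
    and colnorm2_nonzero: "\<And>j. j < p \<Longrightarrow> colnorm2 n X j \<noteq> 0"
    and est_measurable: "\<And>j. j < p \<Longrightarrow> (\<lambda>y. est y j) \<in> borel_measurable (PiM {..<n} (\<lambda>_. borel))"
begin

definition risk :: "real \<Rightarrow> (nat \<Rightarrow> real) \<Rightarrow> ennreal" where
  "risk q \<beta> = (\<integral>\<^sup>+\<xi>. ennreal (lq_pow p q (\<lambda>i. est (obs n p X \<sigma> \<beta> \<xi>) i - \<beta> i)) \<partial>gauss_vec n)"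

definition err :: "nat set \<Rightarrow> nat \<Rightarrow> (nat \<Rightarrow> real) set" where
  "err S j = {\<xi> \<in> space (gauss_vec n). (a / 2 \<le> est (obs n p X \<sigma> (ind_vec a S) \<xi>) j) \<noteq> (j \<in> S)}"

definition accept :: "nat set \<Rightarrow> nat \<Rightarrow> (nat \<Rightarrow> real) set" where
  "accept S j = {\<xi> \<in> space (gauss_vec n). a / 2 \<le> est (obs n p X \<sigma> (ind_vec a S) \<xi>) j}"

lemma sets_accept: "j < p \<Longrightarrow> accept S j \<in> sets (gauss_vec n)"
  unfolding accept_def using measurable_compose[OF measurable_obs est_measurable] by measurable

lemma sets_err: "j < p \<Longrightarrow> err S j \<in> sets (gauss_vec n)"
  unfolding err_def using measurable_compose[OF measurable_obs est_measurable] by measurable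

lemma err_eq_accept: "j \<notin> T \<Longrightarrow> err T j = accept T j"
  unfolding err_def accept_def by auto

lemma err_insert_eq:
  assumes "j < p" "j \<notin> T"
  shows "err (insert j T) j = {\<xi> \<in> space (gauss_vec n). shift_vec n (\<lambda>i. a * X i j / \<sigma>) \<xi> \<notin> accept T j}"
  using assms sigma_pos shift_vec_in_space
  by (auto simp: err_def accept_def obs_ind_vec_insert)

lemma risk_ge_err:
  assumes "q \<ge> 0"
  shows "ennreal ((a / 2) powr q * (\<Sum>j<p. measure (gauss_vec n) (err S j))) \<le> risk q (ind_vec a S)"
proof -
  interpret prob_space "gauss_vec n" by (rule prob_space_gauss_vec)
  have "ennreal ((a / 2) powr q * (\<Sum>j<p. measure (gauss_vec n) (err S j)))
      = (\<integral>\<^sup>+\<xi>. ennreal ((a / 2) powr q * (\<Sum>j<p. indicator (err S j) \<xi>)) \<partial>gauss_vec n)"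
    using sets_err
    by (subst nn_integral_eq_integral)
      (auto simp: integral_sum integrable_sum emeasure_eq_measure
        intro!: integrable_real_indicator AE_I2 mult_nonneg_nonneg sum_nonneg)
  also have "\<dots> \<le> risk q (ind_vec a S)"
    unfolding risk_def
  proof (intro nn_integral_mono ennreal_leI)
    fix \<xi> assume "\<xi> \<in> space (gauss_vec n)"
    then have "(\<Sum>j<p. indicator (err S j) \<xi>)
        = (\<Sum>j<p. of_bool ((a / 2 \<le> est (obs n p X \<sigma> (ind_vec a S) \<xi>) j) \<noteq> (j \<in> S)) :: real)"
      by (intro sum.cong refl) (simp add: err_def indicator_def)
    then show "(a / 2) powr q * (\<Sum>j<p. indicator (err S j) \<xi>)
        \<le> lq_pow p q (\<lambda>i. est (obs n p X \<sigma> (ind_vec a S) \<xi>) i - ind_vec a S i)"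
      using lq_pow_ind_vec_ge[OF a_pos assms] by simp
  qed
  finally show ?thesis .
qed

text \<open>The supports \<open>T\<close> and \<open>insert j T\<close> differ only at \<open>j\<close> and their prior weights are in
  ratio \<open>(1 - \<pi>) : \<pi>\<close>, so their errors at \<open>j\<close> add up to the Bayes risk of a test of the shift
  \<open>a X\<^sub>j / \<sigma>\<close>.\<close>
lemma err_pair_ge:
  assumes "0 < s'" "s' < real s" "s < p" "j < p" and T: "T \<subseteq> {..<p} - {j}"
  shows "binom_weight (s' / p) (p - 1) T * ((s' / s) * psi_coord n p s a \<sigma> X j)
    \<le> binom_weight (s' / p) p T * measure (gauss_vec n) (err T j)
      + binom_weight (s' / p) p (insert j T) * measure (gauss_vec n) (err (insert j T) j)"
proof -
  define \<pi> where "\<pi> = s' / p"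
  have \<pi>: "0 \<le> \<pi>" "\<pi> \<le> s / p" "s / p \<le> 1" "s' / s = \<pi> / (s / p)"
    unfolding \<pi>_def using assms by (simp_all add: divide_right_mono)
  have "j \<notin> T"
    using T by auto
  moreover have "finite T" "card T < p"
    using T finite_subset[OF T] card_mono[OF _ T] \<open>j < p\<close> by auto
  ultimately have weights: "binom_weight \<pi> p T = (1 - \<pi>) * binom_weight \<pi> (p - 1) T"
    "binom_weight \<pi> p (insert j T) = \<pi> * binom_weight \<pi> (p - 1) T"
    by (simp_all add: binom_weight_insert)
  have "(s' / s) * psi_coord n p s a \<sigma> X j
      \<le> (\<pi> / (s / p)) * test_risk n (\<lambda>i. a * X i j / \<sigma>) (s / p) (accept T j)"
    unfolding \<pi>(4) using assms \<pi> sigma_pos a_pos colnorm2_nonzero sets_accept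
    by (intro mult_left_mono psi_coord_le_test_risk) auto
  also have "\<dots> \<le> test_risk n (\<lambda>i. a * X i j / \<sigma>) \<pi> (accept T j)"
    using \<pi>(1-3) by (rule test_risk_prior_scale)
  also have "\<dots> = (1 - \<pi>) * measure (gauss_vec n) (err T j) + \<pi> * measure (gauss_vec n) (err (insert j T) j)"
    using \<open>j < p\<close> \<open>j \<notin> T\<close> by (simp add: test_risk_def err_eq_accept err_insert_eq)
  finally have "binom_weight \<pi> (p - 1) T * ((s' / s) * psi_coord n p s a \<sigma> X j)
      \<le> binom_weight \<pi> (p - 1) T * ((1 - \<pi>) * measure (gauss_vec n) (err T j)
        + \<pi> * measure (gauss_vec n) (err (insert j T) j))"
    by (rule mult_left_mono) (use \<pi> in \<open>simp add: binom_weight_nonneg\<close>)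
  also have "\<dots> = binom_weight \<pi> p T * measure (gauss_vec n) (err T j)
      + binom_weight \<pi> p (insert j T) * measure (gauss_vec n) (err (insert j T) j)"
    unfolding weights by (simp add: algebra_simps)
  finally show ?thesis
    unfolding \<pi>_def .
qed

lemma err_coord_ge:
  assumes s': "0 < s'" "s' < real s" and "s < p" "j < p"
  shows "(s' / s) * psi_coord n p s a \<sigma> X j * (1 - exp (- (real s - s')\<^sup>2 / (2 * real s)))
    \<le> (\<Sum>S\<in>sparse_supports p s. binom_weight (s' / p) p S * measure (gauss_vec n) (err S j))"
proof -
  define \<pi> where "\<pi> = s' / p"
  define Q where "Q = {..<p} - {j}"
  define \<G> where "\<G> = {T \<in> Pow Q. card T < s}"
  have Q: "finite Q" "card Q = p - 1"
    unfolding Q_def using \<open>j < p\<close> by auto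
  have \<pi>: "0 < \<pi>" "\<pi> < 1" "real (card Q) * \<pi> \<le> s'"
    unfolding \<pi>_def Q using assms by (auto simp: field_simps)
  have "(s' / s) * psi_coord n p s a \<sigma> X j * (1 - exp (- (real s - s')\<^sup>2 / (2 * real s)))
      \<le> (s' / s) * psi_coord n p s a \<sigma> X j * (\<Sum>T\<in>\<G>. binom_weight \<pi> (p - 1) T)"
    unfolding \<G>_def Q(2)[symmetric] using assms \<pi> psi_coord_nonneg[of s p]
    by (intro mult_left_mono binom_weight_lower_tail_ge Q) auto
  also have "\<dots> \<le> (\<Sum>T\<in>\<G>. binom_weight \<pi> p T * measure (gauss_vec n) (err T j)
      + binom_weight \<pi> p (insert j T) * measure (gauss_vec n) (err (insert j T) j))"
    unfolding sum_distrib_left \<pi>_def using assms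
    by (intro sum_mono order_trans[OF _ err_pair_ge]) (auto simp: \<G>_def Q_def mult_ac)
  also have "\<dots> \<le> (\<Sum>S\<in>sparse_supports p s. binom_weight \<pi> p S * measure (gauss_vec n) (err S j))"
  proof (rule sum_insert_pairs_le)
    show "\<G> \<union> insert j ` \<G> \<subseteq> sparse_supports p s"
      using Q \<open>j < p\<close> by (auto simp: \<G>_def Q_def sparse_supports_def card_insert_if finite_subset)
  qed (use \<pi> in \<open>auto simp: \<G>_def Q_def intro!: mult_nonneg_nonneg binom_weight_nonneg\<close>)
  finally show ?thesis
    unfolding \<pi>_def .
qed

definition bayes_errors :: "real \<Rightarrow> nat \<Rightarrow> real" where
  "bayes_errors s' s = (\<Sum>S\<in>sparse_supports p s. binom_weight (s' / p) p S * (\<Sum>j<p. measure (gauss_vec n) (err S j)))"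

lemma bayes_error_ge:
  assumes "0 < s'" "s' < real s" "s < p"
  shows "(s' / s) * (1 - exp (- (real s - s')\<^sup>2 / (2 * real s))) * Psi n p s a \<sigma> X
    \<le> bayes_errors s' s"
proof -
  have "(s' / s) * (1 - exp (- (real s - s')\<^sup>2 / (2 * real s))) * Psi n p s a \<sigma> X
      = (\<Sum>j<p. (s' / s) * psi_coord n p s a \<sigma> X j * (1 - exp (- (real s - s')\<^sup>2 / (2 * real s))))"
    unfolding Psi_eq_sum_psi_coord by (simp add: sum_distrib_left sum_distrib_right sum_divide_distrib mult_ac)
  also have "\<dots> \<le> (\<Sum>j<p. \<Sum>S\<in>sparse_supports p s. binom_weight (s' / p) p S * measure (gauss_vec n) (err S j))"
    using assms by (intro sum_mono err_coord_ge) auto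
  also have "\<dots> = (\<Sum>S\<in>sparse_supports p s. binom_weight (s' / p) p S * (\<Sum>j<p. measure (gauss_vec n) (err S j)))"
    by (simp add: sum_distrib_left sum.swap[of _ "{..<p}"])
  finally show ?thesis
    unfolding bayes_errors_def .
qed

lemma minimax_risk_ge_bayes_risk:
  assumes s: "0 < s'" "s' < real s" "s < p" and "0 \<le> q"
  shows "ennreal ((a / 2) powr q * bayes_errors s' s) \<le> (SUP \<beta>\<in>Omega p s a. risk q \<beta>)"
proof -
  define \<S> where "\<S> = sparse_supports p s"
  define M where "M S = (\<Sum>j<p. measure (gauss_vec n) (err S j))" for S
  have "ennreal (\<Sum>S\<in>\<S>. binom_weight (s' / p) p S * ((a / 2) powr q * M S))
      \<le> (SUP \<beta>\<in>Omega p s a. risk q \<beta>)"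
  proof (rule weighted_sum_le_SUP[where g = "ind_vec a"])
    show "finite \<S>"
      unfolding \<S>_def by simp
    have "sum (binom_weight (s' / p) p) \<S> \<le> sum (binom_weight (s' / p) p) (Pow {..<p})"
      unfolding \<S>_def sparse_supports_def using s by (intro sum_mono2 binom_weight_nonneg) auto
    also have "\<dots> = 1"
      using sum_binom_weight_Pow[of "{..<p}" "s' / p"] by simp
    finally show "sum (binom_weight (s' / p) p) \<S> \<le> 1" .
    fix S assume "S \<in> \<S>"
    then show "ind_vec a S \<in> Omega p s a"
      unfolding \<S>_def using a_pos by (rule ind_vec_in_Omega)
    show "0 \<le> binom_weight (s' / p) p S"
      using s by (intro binom_weight_nonneg) auto
    show "0 \<le> (a / 2) powr q * M S"
      unfolding M_def by (simp add: sum_nonneg)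
    show "ennreal ((a / 2) powr q * M S) \<le> risk q (ind_vec a S)"
      unfolding M_def using \<open>0 \<le> q\<close> by (rule risk_ge_err)
  qed
  then show ?thesis
    unfolding \<S>_def M_def bayes_errors_def by (simp add: sum_distrib_left mult_ac)
qed

end

lemma bayes_bound_simplify:
  fixes b d \<Psi> E s s' :: real
  assumes "0 \<le> b" "1 \<le> d" "0 \<le> \<Psi>" "\<Psi> \<le> s" "0 \<le> E" "0 < s'" "0 < s"
  shows "b * (s' / s) * (\<Psi> / d - 2 * s * E) \<le> (b / d) * ((s' / s) * (1 - E) * \<Psi>)"
proof -
  have "\<Psi> / d \<le> \<Psi>"
    using assms by (simp add: divide_le_eq mult_le_cancel_left1)
  then have "\<Psi> / d \<le> 2 * s"
    using assms by linarith
  then have "0 \<le> b * (s' / s) * E * (2 * s - \<Psi> / d)"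
    using assms by (intro mult_nonneg_nonneg) auto
  moreover have "(b / d) * ((s' / s) * (1 - E) * \<Psi>) - b * (s' / s) * (\<Psi> / d - 2 * s * E)
      = b * (s' / s) * E * (2 * s - \<Psi> / d)"
    using assms by (simp add: field_simps)
  ultimately show ?thesis
    by linarith
qed

theorem theorem4:
  fixes n p s :: nat and X :: "nat \<Rightarrow> nat \<Rightarrow> real" and \<sigma> a q s' :: real
    and est :: "(nat \<Rightarrow> real) \<Rightarrow> (nat \<Rightarrow> real)"
  assumes "\<sigma> > 0" and "a > 0" and "q \<ge> 1" and "s < p"
    and "\<forall>j<p. colnorm2 n X j \<noteq> 0"
    and "\<forall>i<p. (\<lambda>y. est y i) \<in> borel_measurable (PiM {..<n} (\<lambda>_. borel))"
    and "0 < s'" and "s' < real s"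
  shows "(SUP \<beta>\<in>Omega p s a. \<integral>\<^sup>+ \<xi>. ennreal (lq_pow p q (\<lambda>i. est (obs n p X \<sigma> \<beta> \<xi>) i - \<beta> i)) \<partial>gauss_vec n)
         \<ge> ennreal (a powr q * (s' / real s) *
              (Psi n p s a \<sigma> X / 2 powr q - 2 * real s * exp (- (real s - s')\<^sup>2 / (2 * real s))))"
proof -
  interpret sparse_regression n p X \<sigma> a est
    using assms by unfold_locales auto
  have s: "0 < s'" "s' < real s" "s < p"
    using assms by auto
  define E where "E = exp (- (real s - s')\<^sup>2 / (2 * real s))"
  have "0 \<le> Psi n p s a \<sigma> X" "Psi n p s a \<sigma> X \<le> real s"
    using s by (auto intro!: Psi_nonneg Psi_le sigma_pos a_pos colnorm2_nonzero)
  then have "a powr q * (s' / s) * (Psi n p s a \<sigma> X / 2 powr q - 2 * real s * E)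
      \<le> (a powr q / 2 powr q) * ((s' / s) * (1 - E) * Psi n p s a \<sigma> X)"
    using s ge_one_powr_ge_zero[of 2 q] assms(3) by (intro bayes_bound_simplify) (auto simp: E_def)
  also have "\<dots> \<le> (a / 2) powr q * bayes_errors s' s"
    unfolding powr_divide E_def using bayes_error_ge[OF s] by (intro mult_left_mono) auto
  finally have "ennreal (a powr q * (s' / s) * (Psi n p s a \<sigma> X / 2 powr q - 2 * real s * E))
      \<le> ennreal ((a / 2) powr q * bayes_errors s' s)"
    by (rule ennreal_leI)
  also have "\<dots> \<le> (SUP \<beta>\<in>Omega p s a. risk q \<beta>)"
    using s assms(3) by (intro minimax_risk_ge_bayes_risk) auto
  finally show ?thesis
    by (simp only: E_def risk_def)
qed

end
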